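(* Let $E$ be a finite directed graph containing at least one nontrivial cycle (a path $\mu$ of positive length with $s(\mu)=r(\mu)$). Then $$\log\rho(A_E)=\max_{v\in E^0}\beta_v=\max\{\dim\partial T(E,v): v\in E^0,\ E^*v\text{ infinite}\}.$$
   Context: For a finite directed graph $E$, $A_E=[|vE^1w|]_{v,w\in E^0}$ is the adjacency matrix ($vE^1w$ the set of edges from $v$ to $w$) and $\rho(A_E)$ its spectral radius. $E^nv=\{\mu\in E^n:r(\mu)=v\}$, $E^*v=\bigcup_nE^nv$; $Z_v(\beta)=\sum_{n\ge0}|E^nv|e^{-\beta n}$ and $\beta_v=\inf\{\beta\in\mathbb R:Z_v(\beta)<\infty\}\in\{-\infty\}\cup[0,\infty)$. The directed cover $T(E,v)$ is the rooted tree with vertex set $E^*v$, root $v$, and an edge from $x$ to $y$ iff $y=ex$ for some $e\in E^1$. $\partial T$ is the set of infinite rooted paths in a rooted tree $T$, with metric $d(x,y)=e^{-n}$ where $n$ is the length of the longest common initial segment of $x\neq y$, and $\dim\partial T$ its Hausdorff dimension. *)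

theory Defs
  imports "HOL-Analysis.Analysis" "Jordan_Normal_Form.Spectral_Radius"
begin

text \<open>A finite directed graph E: vertex set E^0 = {0..<N}, a finite edge set Ed,
  source map s and range map r. Paths are lists of edges [e1,...,en] with
  r(e_i) = s(e_{i+1}); the range of a nonempty path is r of its last edge, the
  empty list represents the length-0 path at the (fixed) vertex v.\<close>

definition graph_path :: "'e set \<Rightarrow> ('e \<Rightarrow> nat) \<Rightarrow> ('e \<Rightarrow> nat) \<Rightarrow> 'e list \<Rightarrow> bool" where
  "graph_path Ed s r xs \<longleftrightarrow> set xs \<subseteq> Ed \<and>
     (\<forall>i. Suc i < length xs \<longrightarrow> r (xs ! i) = s (xs ! Suc i))"

definition paths_to :: "'e set \<Rightarrow> ('e \<Rightarrow> nat) \<Rightarrow> ('e \<Rightarrow> nat) \<Rightarrow> nat \<Rightarrow> nat \<Rightarrow> 'e list set" where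
  "paths_to Ed s r n v = {xs. length xs = n \<and> graph_path Ed s r xs \<and> (xs \<noteq> [] \<longrightarrow> r (last xs) = v)}"

definition all_paths_to :: "'e set \<Rightarrow> ('e \<Rightarrow> nat) \<Rightarrow> ('e \<Rightarrow> nat) \<Rightarrow> nat \<Rightarrow> 'e list set" where
  "all_paths_to Ed s r v = (\<Union>n. paths_to Ed s r n v)"

definition adj_mat :: "nat \<Rightarrow> 'e set \<Rightarrow> ('e \<Rightarrow> nat) \<Rightarrow> ('e \<Rightarrow> nat) \<Rightarrow> complex mat" where
  "adj_mat N Ed s r = mat N N (\<lambda>(v, w). of_nat (card {e \<in> Ed. s e = v \<and> r e = w}))"

definition partition_fun :: "'e set \<Rightarrow> ('e \<Rightarrow> nat) \<Rightarrow> ('e \<Rightarrow> nat) \<Rightarrow> nat \<Rightarrow> real \<Rightarrow> ennreal" where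
  "partition_fun Ed s r v \<beta> = (\<Sum>n. ennreal (real (card (paths_to Ed s r n v)) * exp (- \<beta> * real n)))"

definition crit_beta :: "'e set \<Rightarrow> ('e \<Rightarrow> nat) \<Rightarrow> ('e \<Rightarrow> nat) \<Rightarrow> nat \<Rightarrow> ereal" where
  "crit_beta Ed s r v = Inf (ereal ` {\<beta>. partition_fun Ed s r v \<beta> < \<infinity>})"

text \<open>Boundary of the directed cover T(E,v): infinite rooted paths
  x_0 = v (the empty path), x_1, x_2, ... with x_{k+1} = e x_k for an edge e.\<close>
definition cover_boundary :: "'e set \<Rightarrow> ('e \<Rightarrow> nat) \<Rightarrow> ('e \<Rightarrow> nat) \<Rightarrow> nat \<Rightarrow> (nat \<Rightarrow> 'e list) set" where
  "cover_boundary Ed s r v = {x. x 0 = [] \<and>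
     (\<forall>k. x (Suc k) \<in> all_paths_to Ed s r v \<and> (\<exists>e\<in>Ed. x (Suc k) = e # x k))}"

definition ray_dist :: "(nat \<Rightarrow> 'a) \<Rightarrow> (nat \<Rightarrow> 'a) \<Rightarrow> real" where
  "ray_dist x y = (if x = y then 0 else exp (- real (GREATEST k. \<forall>i\<le>k. x i = y i)))"

definition set_diam :: "('a \<Rightarrow> 'a \<Rightarrow> real) \<Rightarrow> 'a set \<Rightarrow> real" where
  "set_diam d U = (if U = {} then 0 else (SUP p\<in>U \<times> U. d (fst p) (snd p)))"

definition diam_pow :: "('a \<Rightarrow> 'a \<Rightarrow> real) \<Rightarrow> real \<Rightarrow> 'a set \<Rightarrow> ennreal" where
  "diam_pow d t U = (if U = {} then 0 else if t = 0 then 1 else ennreal (set_diam d U powr t))"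

definition hausdorff_content :: "('a \<Rightarrow> 'a \<Rightarrow> real) \<Rightarrow> 'a set \<Rightarrow> real \<Rightarrow> real \<Rightarrow> ennreal" where
  "hausdorff_content d S t \<delta> = (INF U\<in>{U :: nat \<Rightarrow> 'a set. S \<subseteq> (\<Union>n. U n) \<and>
       (\<forall>n. U n \<subseteq> S \<and> bdd_above ((\<lambda>p. d (fst p) (snd p)) ` (U n \<times> U n)) \<and> set_diam d (U n) \<le> \<delta>)}.
       (\<Sum>n. diam_pow d t (U n)))"

definition hausdorff_measure :: "('a \<Rightarrow> 'a \<Rightarrow> real) \<Rightarrow> 'a set \<Rightarrow> real \<Rightarrow> ennreal" where
  "hausdorff_measure d S t = (SUP \<delta>\<in>{0<..}. hausdorff_content d S t \<delta>)"

definition hausdorff_dim :: "('a \<Rightarrow> 'a \<Rightarrow> real) \<Rightarrow> 'a set \<Rightarrow> ereal" where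
  "hausdorff_dim d S = Inf (ereal ` {t. t \<ge> 0 \<and> hausdorff_measure d S t = 0})"

end

(* Let rho be the spectral radius of A_E. The number of walks of length n from w to v is the
   (w, v) entry of A_E^n, so |E^n v| is a column sum of A_E^n. For c > rho the Jordan normal form
   bounds the entries of (A_E / c)^n, whence |E^n v| = O(c^n): Z_v(beta) converges for
   beta > ln rho, and covering the boundary of T(E, v) by the cylinders of the paths in E^n v shows
   that its dimension is at most ln rho.
   Conversely, the moduli of an eigenvector for an eigenvalue of modulus rho form a nonnegative
   vector y with rho y <= A_E y. Choosing a vertex i in the support of y from which every
   reachable vertex of the support leads back to i gives c rho^L <= |closed walks of length L at i|
   for infinitely many L. This makes Z_i(beta) diverge for beta < ln rho, and the uniform measure on
   infinite concatenations of closed walks of length L at i is a mass distribution on the boundary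
   of T(E, i) showing that its dimension is at least t whenever e^(t L) is at most the number of
   these walks. The cycle forces rho >= 1, so ln rho is finite. *)

theory Submission
  imports Defs "HOL-Probability.Probability"
begin

section \<open>Scaled matrices\<close>

lemma index_mult_mat_vec_sum:
  "M \<in> carrier_mat n n \<Longrightarrow> x \<in> carrier_vec n \<Longrightarrow> i < n \<Longrightarrow>
     (M *\<^sub>v x) $ i = (\<Sum>j<n. M $$ (i,j) * x $ j)"
  by (simp add: scalar_prod_def atLeast0LessThan)

lemma index_mult_mat_sum:
  "M \<in> carrier_mat n n \<Longrightarrow> M' \<in> carrier_mat n n \<Longrightarrow> i < n \<Longrightarrow> j < n \<Longrightarrow>
     (M * M') $$ (i,j) = (\<Sum>k<n. M $$ (i,k) * M' $$ (k,j))"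
  by (simp add: scalar_prod_def atLeast0LessThan)

lemma smult_pow_mat:
  fixes M :: "'a :: comm_ring_1 mat"
  assumes "M \<in> carrier_mat n n"
  shows "(a \<cdot>\<^sub>m M) ^\<^sub>m k = a ^ k \<cdot>\<^sub>m M ^\<^sub>m k"
proof (induction k)
  case (Suc k)
  have "(a \<cdot>\<^sub>m M) ^\<^sub>m Suc k = (a ^ k \<cdot>\<^sub>m M ^\<^sub>m k) * (a \<cdot>\<^sub>m M)"
    by (simp add: Suc.IH)
  also have "\<dots> = a ^ Suc k \<cdot>\<^sub>m M ^\<^sub>m Suc k"
    using assms by (intro eq_matI) (auto simp: ac_simps)
  finally show ?case .
qed (use assms in auto)

lemma eigenvector_smult_mat:
  fixes M :: "'a :: field mat"
  assumes M: "M \<in> carrier_mat n n" and a: "a \<noteq> 0" and ev: "eigenvector (a \<cdot>\<^sub>m M) x l"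
  shows "eigenvector M x (l / a)"
proof -
  have x: "x \<in> carrier_vec n" "x \<noteq> 0\<^sub>v n" "(a \<cdot>\<^sub>m M) *\<^sub>v x = l \<cdot>\<^sub>v x"
    using ev M by (auto simp: eigenvector_def)
  have smult_entry: "((a \<cdot>\<^sub>m M) *\<^sub>v x) $ i = a * (M *\<^sub>v x) $ i" if "i < n" for i
    using M x(1) that by simp
  have "M *\<^sub>v x = (l / a) \<cdot>\<^sub>v x"
  proof (rule eq_vecI)
    fix i assume "i < dim_vec ((l / a) \<cdot>\<^sub>v x)"
    hence i: "i < n" using x by simp
    have "l * x $ i = ((a \<cdot>\<^sub>m M) *\<^sub>v x) $ i" using x i by simp
    also have "\<dots> = a * (M *\<^sub>v x) $ i" using i by (rule smult_entry)
    finally show "(M *\<^sub>v x) $ i = ((l / a) \<cdot>\<^sub>v x) $ i"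
      using a x i by (simp add: field_simps)
  qed (use M x in simp)
  thus ?thesis using M x by (simp add: eigenvector_def)
qed

lemma spectral_radius_smult_mat_less_1:
  assumes M: "M \<in> carrier_mat n n" and n: "n > 0" and c: "spectral_radius M < c"
  shows "spectral_radius (complex_of_real (1 / c) \<cdot>\<^sub>m M) < 1"
proof -
  have "spectral_radius M \<ge> 0" using spectral_radius_mem_max(1)[OF M n] by auto
  hence c0: "c > 0" using c by linarith
  let ?B = "complex_of_real (1 / c) \<cdot>\<^sub>m M"
  have B: "?B \<in> carrier_mat n n" using M by simp
  have "norm l < 1" if l: "l \<in> spectrum ?B" for l
  proof -
    obtain x where x: "eigenvector ?B x l" using l unfolding spectrum_def eigenvalue_def by blast
    have "eigenvector M x (l / complex_of_real (1 / c))"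
      by (rule eigenvector_smult_mat[OF M _ x]) (use c0 in simp)
    hence "eigenvector M x (l * complex_of_real c)" by simp
    hence "l * complex_of_real c \<in> spectrum M" by (auto simp: spectrum_def eigenvalue_def)
    hence "norm l * c \<le> spectral_radius M"
      using spectral_radius_mem_max(2)[OF M n] c0 by (force simp: norm_mult)
    hence "norm l * c < 1 * c" using c by linarith
    thus "norm l < 1" using c0 by (simp only: mult_less_cancel_right)
  qed
  thus ?thesis
    unfolding spectral_radius_def
    using card_finite_spectrum(1)[OF B] spectrum_non_empty[OF B n] by auto
qed

section \<open>Paths, walk counts and the adjacency matrix\<close>

lemma graph_path_Nil [simp]: "graph_path Ed s r []"
  by (simp add: graph_path_def)

lemma graph_path_Cons:
  "graph_path Ed s r (e # xs) \<longleftrightarrow> e \<in> Ed \<and> graph_path Ed s r xs \<and> (xs \<noteq> [] \<longrightarrow> r e = s (hd xs))"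
proof
  assume a: "graph_path Ed s r (e # xs)"
  have "\<forall>i. Suc i < length xs \<longrightarrow> r (xs ! i) = s (xs ! Suc i)"
  proof (intro allI impI)
    fix i assume "Suc i < length xs"
    with a have "r ((e#xs) ! Suc i) = s ((e#xs) ! Suc (Suc i))" unfolding graph_path_def by auto
    thus "r (xs ! i) = s (xs ! Suc i)" by simp
  qed
  moreover have "xs \<noteq> [] \<longrightarrow> r e = s (hd xs)"
  proof
    assume "xs \<noteq> []"
    with a have "r ((e#xs) ! 0) = s ((e#xs) ! Suc 0)" unfolding graph_path_def by auto
    thus "r e = s (hd xs)" using \<open>xs \<noteq> []\<close> by (simp add: hd_conv_nth)
  qed
  ultimately show "e \<in> Ed \<and> graph_path Ed s r xs \<and> (xs \<noteq> [] \<longrightarrow> r e = s (hd xs))"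
    using a unfolding graph_path_def by auto
next
  assume a: "e \<in> Ed \<and> graph_path Ed s r xs \<and> (xs \<noteq> [] \<longrightarrow> r e = s (hd xs))"
  show "graph_path Ed s r (e # xs)" unfolding graph_path_def
  proof (intro conjI allI impI)
    show "set (e # xs) \<subseteq> Ed" using a by (auto simp: graph_path_def)
    fix i assume i: "Suc i < length (e # xs)"
    show "r ((e # xs) ! i) = s ((e # xs) ! Suc i)"
    proof (cases i)
      case 0 thus ?thesis using a i by (auto simp: hd_conv_nth)
    next
      case (Suc j) thus ?thesis using a i by (auto simp: graph_path_def)
    qed
  qed
qed

lemma graph_path_append:
  "graph_path Ed s r (xs @ ys) \<longleftrightarrow> graph_path Ed s r xs \<and> graph_path Ed s r ys \<and>
     (xs \<noteq> [] \<longrightarrow> ys \<noteq> [] \<longrightarrow> r (last xs) = s (hd ys))"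
  by (induction xs) (auto simp: graph_path_Cons)

lemma finite_paths_to:
  assumes "finite Ed"
  shows "finite (paths_to Ed s r n v)"
proof (rule finite_subset)
  show "paths_to Ed s r n v \<subseteq> {xs. set xs \<subseteq> Ed \<and> length xs = n}"
    by (auto simp: paths_to_def graph_path_def)
qed (use assms finite_lists_length_eq in blast)

lemma adj_mat_carrier: "adj_mat N Ed s r \<in> carrier_mat N N"
  by (simp add: adj_mat_def)

locale finite_graph =
  fixes N :: nat and Ed :: "'e set" and s r :: "'e \<Rightarrow> nat"
  assumes finite_edges: "finite Ed" and vertices_bounded: "\<forall>e\<in>Ed. s e < N \<and> r e < N"
begin

abbreviation adj :: "complex mat" where "adj \<equiv> adj_mat N Ed s r"

abbreviation rho :: real where "rho \<equiv> spectral_radius adj"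

lemma adj_carrier: "adj \<in> carrier_mat N N"
  by (rule adj_mat_carrier)

definition edge_count :: "nat \<Rightarrow> nat \<Rightarrow> nat" where
  "edge_count u v = card {e \<in> Ed. s e = u \<and> r e = v}"

fun walk_count :: "nat \<Rightarrow> nat \<Rightarrow> nat \<Rightarrow> nat" where
  "walk_count 0 w v = (if w = v then 1 else 0)"
| "walk_count (Suc n) w v = (\<Sum>u<N. walk_count n w u * edge_count u v)"

definition walks :: "nat \<Rightarrow> nat \<Rightarrow> nat \<Rightarrow> 'e list set" where
  "walks n w v = {xs. length xs = n \<and> graph_path Ed s r xs \<and>
      (if xs = [] then w = v else s (hd xs) = w \<and> r (last xs) = v)}"

lemma walks_0: "walks 0 w v = (if w = v then {[]} else {})"
  by (auto simp: walks_def)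

lemma walks_Suc:
  assumes "w < N"
  shows "walks (Suc n) w v =
    (\<lambda>(xs, e). xs @ [e]) ` (\<Union>u\<in>{..<N}. walks n w u \<times> {e \<in> Ed. s e = u \<and> r e = v})"
proof (intro Set.set_eqI iffI)
  fix ys assume ys: "ys \<in> walks (Suc n) w v"
  then have "ys \<noteq> []" by (auto simp: walks_def)
  then obtain xs e where ye: "ys = xs @ [e]" by (metis rev_exhaust)
  have e: "e \<in> Ed" "xs \<noteq> [] \<longrightarrow> r (last xs) = s e"
    using ys ye by (auto simp: walks_def graph_path_append graph_path_Cons)
  have "xs \<in> walks n w (s e)" "e \<in> {e' \<in> Ed. s e' = s e \<and> r e' = v}" "s e < N"
    using ys ye e vertices_bounded by (auto simp: walks_def graph_path_append)
  then show "ys \<in> (\<lambda>(xs, e). xs @ [e]) ` (\<Union>u\<in>{..<N}. walks n w u \<times> {e \<in> Ed. s e = u \<and> r e = v})"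
    using ye by force
next
  fix ys assume "ys \<in> (\<lambda>(xs, e). xs @ [e]) ` (\<Union>u\<in>{..<N}. walks n w u \<times> {e \<in> Ed. s e = u \<and> r e = v})"
  then obtain xs e u where "ys = xs @ [e]" "xs \<in> walks n w u" "e \<in> Ed" "s e = u" "r e = v" by auto
  then show "ys \<in> walks (Suc n) w v"
    by (auto simp: walks_def graph_path_append graph_path_Cons split: if_splits)
qed

lemma finite_walks: "finite (walks n w v)"
proof (rule finite_subset)
  show "walks n w v \<subseteq> {xs. set xs \<subseteq> Ed \<and> length xs = n}"
    by (auto simp: walks_def graph_path_def)
qed (use finite_edges finite_lists_length_eq in blast)

lemma card_walks: "w < N \<Longrightarrow> card (walks n w v) = walk_count n w v"
proof (induction n arbitrary: v)
  case 0 thus ?case by (simp add: walks_0)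
next
  case (Suc n)
  let ?step = "\<lambda>u. walks n w u \<times> {e \<in> Ed. s e = u \<and> r e = v}"
  have "card (walks (Suc n) w v) = card (\<Union>u\<in>{..<N}. ?step u)"
    unfolding walks_Suc[OF Suc.prems] by (rule card_image) (auto simp: inj_on_def)
  also have "\<dots> = (\<Sum>u<N. card (?step u))"
    by (rule card_UN_disjoint) (use finite_walks finite_edges in auto)
  also have "\<dots> = walk_count (Suc n) w v"
    using Suc by (simp add: card_cartesian_product edge_count_def)
  finally show ?case .
qed

lemma walk_count_add:
  "w < N \<Longrightarrow> v < N \<Longrightarrow> walk_count (a + b) w v = (\<Sum>u<N. walk_count a w u * walk_count b u v)"
proof (induction b arbitrary: v)
  case 0
  have "(\<Sum>u<N. walk_count a w u * walk_count 0 u v) = (\<Sum>u\<in>{v}. walk_count a w u * walk_count 0 u v)"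
    by (rule sum.mono_neutral_right) (use 0 in auto)
  thus ?case by simp
next
  case (Suc b)
  have "walk_count (a + Suc b) w v = (\<Sum>x<N. (\<Sum>u<N. walk_count a w u * walk_count b u x) * edge_count x v)"
    using Suc by simp
  also have "\<dots> = (\<Sum>u<N. walk_count a w u * (\<Sum>x<N. walk_count b u x * edge_count x v))"
    by (simp add: sum_distrib_left sum_distrib_right mult.assoc) (rule sum.swap)
  finally show ?case by simp
qed

lemma walk_count_Suc_left:
  assumes "w < N" "v < N"
  shows "walk_count (Suc n) w v = (\<Sum>u<N. edge_count w u * walk_count n u v)"
proof -
  have "walk_count 1 w u = edge_count w u" if "u < N" for u
  proof -
    have "(\<Sum>x<N. walk_count 0 w x * edge_count x u) = (\<Sum>x\<in>{w}. walk_count 0 w x * edge_count x u)"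
      by (rule sum.mono_neutral_right) (use assms in auto)
    thus ?thesis by simp
  qed
  thus ?thesis using walk_count_add[OF assms, of 1 n] by simp
qed

lemma walk_count_mult_le:
  assumes "w < N" "u < N" "v < N"
  shows "walk_count a w u * walk_count b u v \<le> walk_count (a + b) w v"
  unfolding walk_count_add[OF assms(1,3)] by (rule member_le_sum) (use assms in auto)

lemma paths_to_eq_walks:
  assumes "n > 0"
  shows "paths_to Ed s r n v = (\<Union>w\<in>{..<N}. walks n w v)"
proof (intro Set.set_eqI iffI)
  fix xs assume xs: "xs \<in> paths_to Ed s r n v"
  hence "xs \<noteq> []" using assms by (auto simp: paths_to_def)
  moreover from this have "hd xs \<in> Ed" using xs by (auto simp: paths_to_def graph_path_def)
  hence "s (hd xs) < N" using vertices_bounded by auto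
  ultimately show "xs \<in> (\<Union>w\<in>{..<N}. walks n w v)" using xs by (auto simp: paths_to_def walks_def)
qed (use assms in \<open>auto simp: paths_to_def walks_def\<close>)

lemma card_paths_to:
  assumes v: "v < N"
  shows "card (paths_to Ed s r n v) = (\<Sum>w<N. walk_count n w v)"
proof (cases "n = 0")
  case True
  have "(\<Sum>w<N. walk_count 0 w v) = (\<Sum>w\<in>{v}. walk_count 0 w v)"
    by (rule sum.mono_neutral_right) (use v in auto)
  moreover have "paths_to Ed s r 0 v = {[]}" by (auto simp: paths_to_def)
  ultimately show ?thesis using True by simp
next
  case False
  have "card (\<Union>w\<in>{..<N}. walks n w v) = (\<Sum>w<N. card (walks n w v))"
    by (rule card_UN_disjoint) (use finite_walks False in \<open>auto simp: walks_def\<close>)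
  thus ?thesis using False by (simp add: paths_to_eq_walks card_walks)
qed

lemma adj_index: "i < N \<Longrightarrow> j < N \<Longrightarrow> adj $$ (i,j) = of_nat (edge_count i j)"
  by (simp add: adj_mat_def edge_count_def)

lemma adj_power_index:
  "i < N \<Longrightarrow> j < N \<Longrightarrow> (adj ^\<^sub>m n) $$ (i,j) = of_nat (walk_count n i j)"
proof (induction n arbitrary: j)
  case 0 thus ?case by (simp add: adj_mat_def)
next
  case (Suc n)
  have "(adj ^\<^sub>m Suc n) $$ (i,j) = (\<Sum>k<N. (adj ^\<^sub>m n) $$ (i,k) * adj $$ (k,j))"
    using Suc.prems by (simp add: index_mult_mat_sum[OF pow_carrier_mat[OF adj_carrier] adj_carrier])
  also have "\<dots> = (\<Sum>k<N. of_nat (walk_count n i k * edge_count k j))"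
    using Suc by (simp add: adj_mat_def edge_count_def)
  finally show ?case by simp
qed

section \<open>Growth of walk counts\<close>

lemma rho_nonneg:
  assumes "N > 0"
  shows "rho \<ge> 0"
  using spectral_radius_mem_max(1)[OF adj_carrier assms] by auto

lemma walk_count_exp_bound:
  assumes N: "N > 0" and c: "rho < c"
  obtains C where "\<And>k i j. i < N \<Longrightarrow> j < N \<Longrightarrow> real (walk_count k i j) \<le> C * c ^ k"
proof -
  have c0: "c > 0" using c rho_nonneg[OF N] by linarith
  let ?B = "complex_of_real (1 / c) \<cdot>\<^sub>m adj"
  obtain C where C: "\<And>k. norm_bound (?B ^\<^sub>m k) C"
    using spectral_radius_jnf_norm_bound_less_1_upper_triangular[OF
        smult_carrier_mat[OF adj_carrier] spectral_radius_smult_mat_less_1[OF adj_carrier N c]]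
    by blast
  show thesis
  proof (rule that)
    fix k i j assume ij: "i < N" "j < N"
    have "norm ((?B ^\<^sub>m k) $$ (i,j)) \<le> C"
      using C[of k] ij unfolding norm_bound_def by (simp add: adj_mat_def)
    moreover have "(?B ^\<^sub>m k) $$ (i,j) = complex_of_real (1 / c) ^ k * of_nat (walk_count k i j)"
      using ij carrier_matD[OF pow_carrier_mat[OF adj_carrier, of k]]
      by (simp add: smult_pow_mat[OF adj_carrier] adj_power_index)
    hence "norm ((?B ^\<^sub>m k) $$ (i,j)) = real (walk_count k i j) / c ^ k"
      using c0 by (simp add: norm_mult norm_divide norm_power power_one_over)
    ultimately show "real (walk_count k i j) \<le> C * c ^ k"
      using c0 by (simp add: pos_divide_le_eq)
  qed
qed

lemma walk_count_pow_le:
  assumes "u < N"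
  shows "walk_count L u u ^ k \<le> walk_count (k * L) u u"
proof (induction k)
  case (Suc k)
  have "walk_count L u u ^ Suc k \<le> walk_count (k * L) u u * walk_count L u u"
    using Suc by (simp add: mult.commute)
  also have "\<dots> \<le> walk_count (Suc k * L) u u"
    using walk_count_mult_le[OF assms assms assms, of "k * L" L] by (simp add: add.commute)
  finally show ?case .
qed simp

lemma closed_walk_imp_rho_ge_1:
  assumes u: "u < N" and L: "L > 0" and walk: "walk_count L u u > 0"
  shows "rho \<ge> 1"
proof (rule ccontr)
  assume "\<not> rho \<ge> 1"
  define c where "c = (1 + rho) / 2"
  have N: "N > 0" using u by simp
  have c: "rho < c" "c < 1" "c \<ge> 0" using rho_nonneg[OF N] \<open>\<not> rho \<ge> 1\<close> by (auto simp: c_def)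
  obtain C where C: "\<And>k. real (walk_count k u u) \<le> C * c ^ k"
    using walk_count_exp_bound[OF N c(1)] u by metis
  have "(\<lambda>k. C * c ^ k) \<longlonglongrightarrow> C * 0"
    using c by (intro tendsto_mult_left LIMSEQ_power_zero) auto
  hence "eventually (\<lambda>k. C * c ^ k < 1) sequentially" by (intro order_tendstoD(2)) auto
  then obtain M where M: "C * c ^ M < 1" by (auto simp: eventually_sequentially)
  have "1 \<le> walk_count L u u ^ M" using walk by simp
  also have "\<dots> \<le> walk_count (M * L) u u" by (rule walk_count_pow_le[OF u])
  finally have "1 \<le> C * c ^ (M * L)" using C[of "M * L"] by linarith
  moreover have "c ^ (M * L) \<le> c ^ M" using c L by (intro power_decreasing) auto
  moreover have "C \<ge> 0" using C[of 0] by simp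
  ultimately have "1 \<le> C * c ^ M" by (meson mult_left_mono order_trans)
  thus False using M by simp
qed

lemma summable_card_paths_to:
  assumes N: "N > 0" and v: "v < N" and t: "ln rho < t"
  shows "summable (\<lambda>n. real (card (paths_to Ed s r n v)) * exp (- t * real n))"
proof -
  have "rho < exp t"
  proof (cases "rho > 0")
    case True thus ?thesis using t by (metis exp_less_mono exp_ln)
  qed (use rho_nonneg[OF N] in auto)
  define c where "c = (rho + exp t) / 2"
  have c: "rho < c" "c > 0" "c < exp t" using \<open>rho < exp t\<close> rho_nonneg[OF N] by (auto simp: c_def)
  obtain C where C: "\<And>k i j. i < N \<Longrightarrow> j < N \<Longrightarrow> real (walk_count k i j) \<le> C * c ^ k"
    using walk_count_exp_bound[OF N c(1)] by blast
  define x where "x = c * exp (- t)"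
  have x: "0 \<le> x" "x < 1" using c by (auto simp: x_def exp_minus field_simps)
  show ?thesis
  proof (rule summable_comparison_test'[OF summable_mult[OF summable_geometric[of x]]])
    fix n
    have "real (card (paths_to Ed s r n v)) \<le> (\<Sum>w<N. C * c ^ n)"
      unfolding card_paths_to[OF v] of_nat_sum using C v by (intro sum_mono) auto
    hence "real (card (paths_to Ed s r n v)) * exp (- t) ^ n \<le> (\<Sum>w<N. C * c ^ n) * exp (- t) ^ n"
      by (rule mult_right_mono) simp
    also have "\<dots> = real N * C * x ^ n" by (simp add: x_def power_mult_distrib)
    finally have "real (card (paths_to Ed s r n v)) * exp (- t * real n) \<le> real N * C * x ^ n"
      by (metis exp_of_nat_mult mult.commute)
    thus "norm (real (card (paths_to Ed s r n v)) * exp (- t * real n)) \<le> real N * C * x ^ n"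
      by simp
  qed (use x in auto)
qed

lemma exists_nonneg_subeigenvector:
  assumes N: "N > 0"
  obtains y :: "nat \<Rightarrow> real" where "\<And>j. y j \<ge> 0" "\<exists>j<N. y j > 0"
    "\<And>i. i < N \<Longrightarrow> rho * y i \<le> (\<Sum>j<N. real (edge_count i j) * y j)"
proof -
  obtain l where l: "l \<in> spectrum adj" "norm l = rho"
    using spectral_radius_mem_max(1)[OF adj_carrier N] by auto
  then obtain x where "eigenvector adj x l" unfolding spectrum_def eigenvalue_def by blast
  hence x: "x \<in> carrier_vec N" "x \<noteq> 0\<^sub>v N" "adj *\<^sub>v x = l \<cdot>\<^sub>v x"
    using adj_carrier by (auto simp: eigenvector_def)
  define y where "y j = norm (x $ j)" for j
  have "\<exists>j<N. x $ j \<noteq> 0"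
  proof (rule ccontr)
    assume "\<not> ?thesis"
    hence "x = 0\<^sub>v N" using x(1) by (intro eq_vecI) auto
    thus False using x(2) by simp
  qed
  hence "\<exists>j<N. y j > 0" by (auto simp: y_def)
  moreover have "rho * y i \<le> (\<Sum>j<N. real (edge_count i j) * y j)" if i: "i < N" for i
  proof -
    have "l * x $ i = (adj *\<^sub>v x) $ i" using x i by simp
    also have "\<dots> = (\<Sum>j<N. of_nat (edge_count i j) * x $ j)"
      using i by (simp add: index_mult_mat_vec_sum[OF adj_carrier x(1) i] adj_index)
    finally have "norm (l * x $ i) \<le> (\<Sum>j<N. norm (of_nat (edge_count i j) * x $ j))"
      by (simp add: norm_sum)
    thus ?thesis using l by (simp add: y_def norm_mult)
  qed
  ultimately show thesis using that[of y] by (auto simp: y_def)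
qed

lemma subeigenvector_iterate:
  assumes y: "\<And>j. y j \<ge> 0" and sub: "\<And>i. i < N \<Longrightarrow> c * y i \<le> (\<Sum>j<N. real (edge_count i j) * y j)"
    and c: "c \<ge> 0" and i: "i < N"
  shows "c ^ n * y i \<le> (\<Sum>j<N. real (walk_count n i j) * y j)"
  using i
proof (induction n arbitrary: i)
  case 0
  have "(\<Sum>j<N. real (walk_count 0 i j) * y j) = (\<Sum>j\<in>{i}. real (walk_count 0 i j) * y j)"
    by (rule sum.mono_neutral_right) (use 0 in auto)
  thus ?case by simp
next
  case (Suc n)
  have "c ^ Suc n * y i \<le> c ^ n * (\<Sum>u<N. real (edge_count i u) * y u)"
    using mult_left_mono[OF sub[OF Suc.prems], of "c ^ n"] c by (simp add: algebra_simps)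
  also have "\<dots> = (\<Sum>u<N. real (edge_count i u) * (c ^ n * y u))"
    by (simp add: sum_distrib_left algebra_simps)
  also have "\<dots> \<le> (\<Sum>u<N. real (edge_count i u) * (\<Sum>j<N. real (walk_count n u j) * y j))"
    using Suc.IH by (auto intro!: sum_mono mult_left_mono)
  also have "\<dots> = (\<Sum>u<N. \<Sum>j<N. real (edge_count i u) * (real (walk_count n u j) * y j))"
    by (simp add: sum_distrib_left)
  also have "\<dots> = (\<Sum>j<N. \<Sum>u<N. real (edge_count i u) * (real (walk_count n u j) * y j))"
    by (rule sum.swap)
  also have "\<dots> = (\<Sum>j<N. real (walk_count (Suc n) i j) * y j)"
    using Suc.prems by (intro sum.cong)
      (simp_all add: walk_count_Suc_left sum_distrib_right mult.assoc del: walk_count.simps(2))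
  finally show ?case .
qed

lemma exists_vertex_reachable_back:
  assumes V: "finite V" "V \<noteq> {}" "V \<subseteq> {..<N}"
  obtains i where "i \<in> V" "\<And>j d. j \<in> V \<Longrightarrow> walk_count d i j > 0 \<Longrightarrow> \<exists>d'. walk_count d' j i > 0"
proof -
  define reach where "reach i = {j \<in> V. \<exists>d. walk_count d i j > 0}" for i
  obtain i where "is_arg_min (\<lambda>i. card (reach i)) (\<lambda>i. i \<in> V) i"
    using ex_is_arg_min_if_finite[OF V(1,2)] by blast
  hence i: "i \<in> V" and imin: "\<And>i'. i' \<in> V \<Longrightarrow> card (reach i) \<le> card (reach i')"
    by (auto simp: is_arg_min_linorder)
  show thesis
  proof (rule that[OF i])
    fix j d assume j: "j \<in> V" and d: "walk_count d i j > 0"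
    have "reach j \<subseteq> reach i"
    proof
      fix k assume "k \<in> reach j"
      then obtain d' where k: "k \<in> V" "walk_count d' j k > 0" by (auto simp: reach_def)
      have "walk_count d i j * walk_count d' j k \<le> walk_count (d + d') i k"
        by (rule walk_count_mult_le) (use i j k V(3) in auto)
      hence "walk_count (d + d') i k > 0" using d k(2) by (metis nat_0_less_mult_iff order_less_le_trans)
      thus "k \<in> reach i" using k(1) by (auto simp: reach_def)
    qed
    moreover have "finite (reach i)" using V(1) by (simp add: reach_def)
    ultimately have "reach j = reach i"
      using imin[OF j] card_mono card_subset_eq le_antisym by metis
    moreover have "i \<in> reach i" using i by (auto simp: reach_def intro!: exI[of _ 0])
    ultimately show "\<exists>d'. walk_count d' j i > 0" by (auto simp: reach_def)
  qed
qed

lemma subeigenvector_spread: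
  assumes y: "\<And>j. y j \<ge> 0" and sub: "\<And>i. i < N \<Longrightarrow> c * y i \<le> (\<Sum>j<N. real (edge_count i j) * y j)"
    and c: "c > 0" and i: "i < N" "y i > 0" and Ym: "\<And>j. j < N \<Longrightarrow> y j \<le> Ym"
  shows "\<exists>j<N. y j > 0 \<and> y i / (real N * Ym) * c ^ n \<le> real (walk_count n i j)"
proof (rule ccontr)
  assume small: "\<not> ?thesis"
  have N: "real N > 0" and Ym0: "Ym > 0" using i Ym[of i] by auto
  have "real (walk_count n i j) * y j < c ^ n * y i / real N" if j: "j < N" for j
  proof (cases "y j > 0")
    case True
    hence "real (walk_count n i j) < y i / (real N * Ym) * c ^ n" using small j by auto
    hence "real (walk_count n i j) * Ym < y i / (real N * Ym) * c ^ n * Ym"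
      using Ym0 by (rule mult_strict_right_mono)
    also have "\<dots> = c ^ n * y i / real N" using Ym0 by (simp add: field_simps)
    finally have "real (walk_count n i j) * Ym < c ^ n * y i / real N" .
    moreover have "real (walk_count n i j) * y j \<le> real (walk_count n i j) * Ym"
      using Ym[OF j] by (simp add: mult_left_mono)
    ultimately show ?thesis by linarith
  qed (use y[of j] i c N in auto)
  hence "(\<Sum>j<N. real (walk_count n i j) * y j) < (\<Sum>j<N. c ^ n * y i / real N)"
    using N by (intro sum_strict_mono) auto
  also have "\<dots> = c ^ n * y i" using N by simp
  finally show False using subeigenvector_iterate[OF y sub _ i(1), of n] c by simp
qed

lemma frequent_closed_walk_growth:
  assumes N: "N > 0" and rho: "rho \<ge> 1"
  obtains i c where "i < N" "c > 0" "\<exists>\<^sub>F L in sequentially. c * rho ^ L \<le> real (walk_count L i i)"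
proof -
  obtain y :: "nat \<Rightarrow> real" where y: "\<And>j. y j \<ge> 0" "\<exists>j<N. y j > 0"
    "\<And>i. i < N \<Longrightarrow> rho * y i \<le> (\<Sum>j<N. real (edge_count i j) * y j)"
    using exists_nonneg_subeigenvector[OF N] by blast
  define V where "V = {j. j < N \<and> y j > 0}"
  have V: "finite V" "V \<noteq> {}" "V \<subseteq> {..<N}" using y(2) by (auto simp: V_def)
  obtain i where "i \<in> V" and returns: "\<And>j d. j \<in> V \<Longrightarrow> walk_count d i j > 0 \<Longrightarrow> \<exists>d'. walk_count d' j i > 0"
    using exists_vertex_reachable_back[OF V] by blast
  hence i: "i < N" "y i > 0" by (auto simp: V_def)
  define c0 where "c0 = y i / (real N * Max (y ` {..<N}))"
  have "Max (y ` {..<N}) > 0"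
    using i Max_ge[of "y ` {..<N}" "y i"] by (simp add: order_less_le_trans)
  hence c0: "c0 > 0" unfolding c0_def by (intro divide_pos_pos mult_pos_pos) (use i N in auto)
  define d where "d j = (SOME d. walk_count d j i > 0)" for j
  define D where "D = Max (d ` V)"
  define c where "c = c0 / rho ^ D"
  have "\<exists>L\<ge>n. c * rho ^ L \<le> real (walk_count L i i)" for n
  proof -
    obtain j where j: "j \<in> V" and big: "c0 * rho ^ n \<le> real (walk_count n i j)"
      using subeigenvector_spread[OF y(1,3) _ i, of "Max (y ` {..<N})" n] rho
      by (auto simp: V_def c0_def)
    have "0 < c0 * rho ^ n" using c0 rho by simp
    hence "walk_count n i j > 0" using big by linarith
    hence "walk_count (d j) j i > 0" using returns[OF j] unfolding d_def by (metis someI_ex)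
    hence "walk_count n i j \<le> walk_count n i j * walk_count (d j) j i" by simp
    also have "\<dots> \<le> walk_count (n + d j) i i"
      using walk_count_mult_le i j by (simp add: V_def)
    finally have "walk_count n i j \<le> walk_count (n + d j) i i" .
    moreover have "rho ^ d j \<le> rho ^ D" using rho j V(1) by (auto simp: D_def intro: power_increasing)
    hence "rho ^ d j / rho ^ D \<le> 1" using rho by simp
    hence "c0 * rho ^ n * (rho ^ d j / rho ^ D) \<le> c0 * rho ^ n"
      by (rule mult_left_le) (use c0 rho in simp)
    hence "c * rho ^ (n + d j) \<le> c0 * rho ^ n" by (simp add: c_def power_add)
    ultimately show ?thesis using big by (intro exI[of _ "n + d j"]) auto
  qed
  moreover have "c > 0" using c0 rho by (simp add: c_def)
  ultimately show thesis using that i(1) by (auto simp: frequently_sequentially)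
qed

end

section \<open>The critical inverse temperatures\<close>

lemma Inf_ereal_le_of_upper:
  assumes "\<And>b. b > a \<Longrightarrow> b \<in> S"
  shows "Inf (ereal ` S) \<le> ereal a"
proof (rule Inf_le_iff[THEN iffD2], intro allI impI)
  fix y assume "ereal a < y"
  then obtain z where z: "ereal a < z" "z < y" using dense by auto
  then obtain b where b: "z = ereal b" by (cases z) auto
  hence "b \<in> S" using z assms by simp
  thus "\<exists>x\<in>ereal ` S. x < y" using z b by auto
qed

lemma partition_fun_less_top_iff:
  "partition_fun Ed s r v \<beta> < \<infinity> \<longleftrightarrow>
     summable (\<lambda>n. real (card (paths_to Ed s r n v)) * exp (- \<beta> * real n))"
  (is "_ \<longleftrightarrow> summable ?f")
proof -
  have nonneg: "\<And>n. ?f n \<ge> 0" by simp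
  show ?thesis
    unfolding partition_fun_def infinity_ennreal_def less_top[symmetric]
    by (rule iffI, erule summable_suminf_not_top[OF nonneg], erule ennreal_suminf_neq_top[OF _ nonneg])
qed

context finite_graph
begin

lemma crit_beta_le_ln_rho:
  assumes N: "N > 0" and v: "v < N"
  shows "crit_beta Ed s r v \<le> ereal (ln rho)"
  unfolding crit_beta_def
  by (rule Inf_ereal_le_of_upper, rule CollectI, rule partition_fun_less_top_iff[THEN iffD2],
      rule summable_card_paths_to[OF N v])

lemma ln_rho_le_crit_beta:
  assumes i: "i < N" and c: "c > 0" and rho: "rho \<ge> 1"
    and growth: "\<exists>\<^sub>F L in sequentially. c * rho ^ L \<le> real (walk_count L i i)"
  shows "ereal (ln rho) \<le> crit_beta Ed s r i"
  unfolding crit_beta_def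
proof (rule Inf_greatest)
  fix x assume "x \<in> ereal ` {\<beta>. partition_fun Ed s r i \<beta> < \<infinity>}"
  then obtain b where x: "x = ereal b" and fin: "partition_fun Ed s r i b < \<infinity>" by blast
  define f where "f n = real (card (paths_to Ed s r n i)) * exp (- b * real n)" for n
  have "summable f" using fin unfolding f_def partition_fun_less_top_iff .
  hence "f \<longlonglongrightarrow> 0" by (rule summable_LIMSEQ_zero)
  hence "eventually (\<lambda>n. f n < c) sequentially" using c by (rule order_tendstoD(2))
  then obtain L where L: "c * rho ^ L \<le> real (walk_count L i i)" "f L < c"
    using frequently_eventually_frequently[OF growth] by (auto elim: frequentlyE)
  have "ln rho \<le> b"
  proof (rule ccontr)
    assume "\<not> ln rho \<le> b"
    hence "exp b < exp (ln rho)" by simp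
    hence "1 \<le> rho / exp b" using rho by simp
    hence "1 \<le> (rho * exp (- b)) ^ L" by (simp add: exp_minus inverse_eq_divide one_le_power)
    hence "c \<le> c * (rho * exp (- b)) ^ L" using c by simp
    also have "\<dots> = c * rho ^ L * exp (- b * real L)"
      by (simp add: power_mult_distrib exp_of_nat_mult[symmetric] mult.commute mult.left_commute)
    also have "\<dots> \<le> real (walk_count L i i) * exp (- b * real L)" using L(1) by simp
    also have "\<dots> \<le> f L"
      using i by (auto simp: f_def card_paths_to intro!: mult_right_mono member_le_sum)
    finally show False using L(2) by simp
  qed
  thus "ereal (ln rho) \<le> x" using x by simp
qed

end

section \<open>The boundary of the directed cover\<close>

lemma cover_boundary_length:
  assumes "x \<in> cover_boundary Ed s r v"
  shows "length (x k) = k"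
proof (induction k)
  case 0 from assms show ?case by (simp add: cover_boundary_def)
next
  case (Suc k)
  from assms obtain e where "x (Suc k) = e # x k" by (auto simp: cover_boundary_def)
  with Suc show ?case by simp
qed

lemma cover_boundary_drop:
  assumes "x \<in> cover_boundary Ed s r v" "k \<le> n"
  shows "x k = drop (n - k) (x n)"
  using assms(2)
proof (induction n)
  case 0 thus ?case using assms(1) by (simp add: cover_boundary_def)
next
  case (Suc n)
  show ?case
  proof (cases "k = Suc n")
    case True thus ?thesis by simp
  next
    case False
    hence kn: "k \<le> n" using Suc.prems by simp
    obtain e where "x (Suc n) = e # x n" using assms(1) by (auto simp: cover_boundary_def)
    moreover have "Suc n - k = Suc (n - k)" using kn by simp
    ultimately show ?thesis using Suc.IH[OF kn] by simp
  qed
qed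

lemma cover_boundary_paths_to:
  assumes "x \<in> cover_boundary Ed s r v"
  shows "x n \<in> paths_to Ed s r n v"
proof (cases n)
  case 0 thus ?thesis using assms by (simp add: cover_boundary_def paths_to_def)
next
  case (Suc m)
  have "x (Suc m) \<in> all_paths_to Ed s r v" using assms by (simp add: cover_boundary_def)
  then obtain k where "x (Suc m) \<in> paths_to Ed s r k v" by (auto simp: all_paths_to_def)
  moreover have "length (x (Suc m)) = Suc m" using cover_boundary_length[OF assms] .
  ultimately show ?thesis using Suc by (auto simp: paths_to_def)
qed

lemma ray_dist_nonneg: "ray_dist x y \<ge> 0"
  by (simp add: ray_dist_def)

lemma ray_dist_le_exp:
  assumes "\<forall>j\<le>n. x j = y j"
  shows "ray_dist x y \<le> exp (- real n)"
proof (cases "x = y")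
  case True thus ?thesis by (simp add: ray_dist_def)
next
  case False
  then obtain j where j: "x j \<noteq> y j" by auto
  have "n \<le> (GREATEST k. \<forall>i\<le>k. x i = y i)"
  proof (rule Greatest_le_nat[of _ n j])
    show "\<forall>i\<le>n. x i = y i" using assms .
    fix k assume "\<forall>i\<le>k. x i = y i"
    thus "k \<le> j" using j by (metis not_le order_less_imp_le)
  qed
  thus ?thesis using False by (simp add: ray_dist_def)
qed

lemma ray_dist_le_imp_agree:
  assumes "ray_dist x y \<le> D" "D > 0" and x0: "x 0 = y 0"
  shows "\<forall>j\<le>nat \<lceil>- ln D\<rceil>. x j = y j"
proof (cases "x = y")
  case True thus ?thesis by simp
next
  case False
  then obtain j where j: "x j \<noteq> y j" by auto
  define G where "G = (GREATEST k. \<forall>i\<le>k. x i = y i)"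
  have bnd: "\<And>k. \<forall>i\<le>k. x i = y i \<Longrightarrow> k \<le> j" using j by (metis not_le order_less_imp_le)
  have QG: "\<forall>i\<le>G. x i = y i" unfolding G_def
    by (rule GreatestI_nat[of _ 0 j]) (use x0 bnd in auto)
  have "exp (- real G) \<le> D" using assms(1) False by (simp add: ray_dist_def G_def)
  hence "- real G \<le> ln D" using assms(2) by (metis exp_le_cancel_iff exp_ln)
  hence "- ln D \<le> real G" by simp
  hence "\<lceil>- ln D\<rceil> \<le> int G" by (simp add: ceiling_le_iff)
  hence m: "nat \<lceil>- ln D\<rceil> \<le> G" by (simp add: nat_le_iff)
  show ?thesis
  proof (intro allI impI)
    fix k assume "k \<le> nat \<lceil>- ln D\<rceil>"
    hence "k \<le> G" using m by linarith
    thus "x k = y k" using QG by blast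
  qed
qed

lemma set_diam_le:
  assumes "U \<noteq> {}" "\<And>x y. x \<in> U \<Longrightarrow> y \<in> U \<Longrightarrow> d x y \<le> B"
  shows "set_diam d U \<le> B"
  unfolding set_diam_def using assms by (auto intro!: cSUP_least)

lemma le_set_diam:
  assumes "bdd_above ((\<lambda>p. d (fst p) (snd p)) ` (U \<times> U))" "x \<in> U" "y \<in> U"
  shows "d x y \<le> set_diam d U"
proof -
  have "d (fst (x,y)) (snd (x,y)) \<le> (SUP p\<in>U \<times> U. d (fst p) (snd p))"
    by (rule cSUP_upper) (use assms in auto)
  thus ?thesis using assms by (auto simp: set_diam_def)
qed

lemma hausdorff_content_le_finite_cover:
  fixes U :: "'i \<Rightarrow> 'a set"
  assumes I: "finite I" and cover: "S \<subseteq> (\<Union>i\<in>I. U i)" and sub: "\<And>i. i \<in> I \<Longrightarrow> U i \<subseteq> S"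
    and diam: "\<And>i x y. i \<in> I \<Longrightarrow> x \<in> U i \<Longrightarrow> y \<in> U i \<Longrightarrow> d x y \<le> D"
    and d: "\<And>x y. d x y \<ge> 0" and D: "0 \<le> D" "D \<le> \<delta>" and t: "t > 0"
  shows "hausdorff_content d S t \<delta> \<le> ennreal (real (card I) * D powr t)"
proof -
  obtain ps where ps: "set ps = I" "distinct ps" using finite_distinct_list[OF I] by blast
  define V where "V j = (if j < length ps then U (ps ! j) else {})" for j
  have V_diam: "d x y \<le> D" if "x \<in> V j" "y \<in> V j" for j x y
    using that diam[of "ps ! j"] ps(1) nth_mem by (auto simp: V_def split: if_splits)
  have bdd: "bdd_above ((\<lambda>p. d (fst p) (snd p)) ` (V j \<times> V j))" for j
    by (rule bdd_aboveI[of _ D]) (auto intro: V_diam)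
  have diam_V: "0 \<le> set_diam d (V j) \<and> set_diam d (V j) \<le> D" if ne: "V j \<noteq> {}" for j
  proof -
    obtain x where x: "x \<in> V j" using ne by blast
    have "0 \<le> set_diam d (V j)" using d[of x x] le_set_diam[OF bdd x x] by linarith
    thus ?thesis using set_diam_le[of "V j" d D, OF ne V_diam[where j = j]] by blast
  qed
  have V_diam_pow: "diam_pow d t (V j) \<le> ennreal (D powr t)" for j
    using diam_V[of j] t by (cases "V j = {}") (auto simp: diam_pow_def intro!: ennreal_leI powr_mono2)
  have "V \<in> {U. S \<subseteq> (\<Union>n. U n) \<and> (\<forall>n. U n \<subseteq> S \<and>
      bdd_above ((\<lambda>p. d (fst p) (snd p)) ` (U n \<times> U n)) \<and> set_diam d (U n) \<le> \<delta>)}"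
  proof (intro CollectI conjI allI bdd subsetI)
    fix x assume "x \<in> S"
    then obtain i where i: "i \<in> I" "x \<in> U i" using cover by blast
    then obtain j where "j < length ps" "ps ! j = i" using ps(1) by (auto simp: in_set_conv_nth)
    thus "x \<in> (\<Union>n. V n)" using i by (auto simp: V_def)
  next
    fix j x assume "x \<in> V j"
    thus "x \<in> S" using sub[of "ps ! j"] ps(1) nth_mem[of j ps] by (auto simp: V_def split: if_splits)
  next
    fix j show "set_diam d (V j) \<le> \<delta>"
      using diam_V[of j] D by (cases "V j = {}") (auto simp: set_diam_def)
  qed
  hence "hausdorff_content d S t \<delta> \<le> (\<Sum>j. diam_pow d t (V j))"
    unfolding hausdorff_content_def by (rule INF_lower)
  also have "\<dots> = (\<Sum>j<length ps. diam_pow d t (V j))"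
    by (rule suminf_finite) (auto simp: V_def diam_pow_def)
  also have "\<dots> \<le> (\<Sum>j<length ps. ennreal (D powr t))" by (rule sum_mono) (rule V_diam_pow)
  also have "\<dots> = ennreal (real (card I) * D powr t)"
    using ps distinct_card[OF ps(2)] by (simp add: ennreal_mult' ennreal_of_nat_eq_real_of_nat)
  finally show ?thesis .
qed

lemma hausdorff_content_cover_boundary_le:
  assumes "finite Ed" and t: "t > 0" and n: "exp (- real n) \<le> \<delta>"
  shows "hausdorff_content ray_dist (cover_boundary Ed s r v) t \<delta>
           \<le> ennreal (real (card (paths_to Ed s r n v)) * exp (- t * real n))"
proof -
  let ?S = "cover_boundary Ed s r v"
  have "hausdorff_content ray_dist ?S t \<delta>
      \<le> ennreal (real (card (paths_to Ed s r n v)) * exp (- real n) powr t)"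
  proof (rule hausdorff_content_le_finite_cover[where U = "\<lambda>p. {x \<in> ?S. x n = p}"])
    show "finite (paths_to Ed s r n v)" using assms(1) by (rule finite_paths_to)
    show "?S \<subseteq> (\<Union>p\<in>paths_to Ed s r n v. {x \<in> ?S. x n = p})"
    proof
      fix x assume "x \<in> ?S"
      thus "x \<in> (\<Union>p\<in>paths_to Ed s r n v. {x \<in> ?S. x n = p})"
        using cover_boundary_paths_to[of x] by auto
    qed
    fix p x y assume x: "x \<in> {x \<in> ?S. x n = p}" and y: "y \<in> {x \<in> ?S. x n = p}"
    have "\<forall>k\<le>n. x k = y k"
      using x y cover_boundary_drop[of x Ed s r v _ n] cover_boundary_drop[of y Ed s r v _ n] by simp
    thus "ray_dist x y \<le> exp (- real n)" by (rule ray_dist_le_exp)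
  qed (use n t ray_dist_nonneg in auto)
  also have "exp (- real n) powr t = exp (- t * real n)" by (simp add: powr_def)
  finally show ?thesis .
qed

lemma hausdorff_measure_cover_boundary_eq_0:
  assumes "finite Ed" and t: "t > 0"
    and summable: "summable (\<lambda>n. real (card (paths_to Ed s r n v)) * exp (- t * real n))"
  shows "hausdorff_measure ray_dist (cover_boundary Ed s r v) t = 0"
proof -
  define f where "f n = real (card (paths_to Ed s r n v)) * exp (- t * real n)" for n
  have f: "f \<longlonglongrightarrow> 0" using summable unfolding f_def by (rule summable_LIMSEQ_zero)
  have "(\<lambda>n. exp (- 1) ^ n :: real) \<longlonglongrightarrow> 0" by (rule LIMSEQ_power_zero) simp
  hence exp: "(\<lambda>n. exp (- real n)) \<longlonglongrightarrow> 0" by (simp add: exp_of_nat_mult[symmetric])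
  have "hausdorff_content ray_dist (cover_boundary Ed s r v) t \<delta> \<le> 0" if \<delta>: "\<delta> > 0" for \<delta>
  proof (rule ennreal_le_epsilon)
    fix e :: real assume e: "e > 0"
    have "eventually (\<lambda>n. f n < e \<and> exp (- real n) < \<delta>) sequentially"
      using eventually_conj[OF order_tendstoD(2)[OF f e] order_tendstoD(2)[OF exp \<delta>]] .
    then obtain n where n: "f n < e" "exp (- real n) < \<delta>" by (auto simp: eventually_sequentially)
    have "hausdorff_content ray_dist (cover_boundary Ed s r v) t \<delta> \<le> ennreal (f n)"
      unfolding f_def by (rule hausdorff_content_cover_boundary_le[OF assms(1) t]) (use n in simp)
    also have "\<dots> \<le> ennreal e" using n by (simp add: ennreal_leI)
    finally show "hausdorff_content ray_dist (cover_boundary Ed s r v) t \<delta> \<le> 0 + ennreal e" by simp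
  qed
  thus ?thesis unfolding hausdorff_measure_def by simp
qed

context finite_graph
begin

lemma hausdorff_dim_le_ln_rho:
  assumes N: "N > 0" and rho: "rho \<ge> 1" and v: "v < N"
  shows "hausdorff_dim ray_dist (cover_boundary Ed s r v) \<le> ereal (ln rho)"
  unfolding hausdorff_dim_def
proof (rule Inf_ereal_le_of_upper)
  fix t assume t: "ln rho < t"
  have t0: "t > 0" using t ln_ge_zero[OF rho] by linarith
  have "hausdorff_measure ray_dist (cover_boundary Ed s r v) t = 0"
    by (rule hausdorff_measure_cover_boundary_eq_0[OF finite_edges t0 summable_card_paths_to[OF N v t]])
  thus "t \<in> {t. 0 \<le> t \<and> hausdorff_measure ray_dist (cover_boundary Ed s r v) t = 0}" using t0 by simp
qed

end

section \<open>Rays made of closed walks\<close>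

primrec loops_concat :: "(nat \<Rightarrow> 'a list) \<Rightarrow> nat \<Rightarrow> 'a list" where
  "loops_concat w 0 = []"
| "loops_concat w (Suc q) = w q @ loops_concat w q"

text \<open>For walks w k of length L, loop_ray L w k is the suffix of length k of the infinite word
  \<dots> w 2 w 1 w 0; as k grows it traces a ray of the directed cover.\<close>

definition loop_ray :: "nat \<Rightarrow> (nat \<Rightarrow> 'a list) \<Rightarrow> nat \<Rightarrow> 'a list" where
  "loop_ray L w k = drop (Suc k * L - k) (loops_concat w (Suc k))"

lemma le_Suc_mult: "L > 0 \<Longrightarrow> Suc k \<le> Suc k * L"
  using mult_le_mono2[of 1 L "Suc k"] by simp

lemma length_loops_concat: "(\<And>k. length (w k) = L) \<Longrightarrow> length (loops_concat w q) = q * L"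
  by (induction q) auto

lemma loops_concat_inj:
  assumes "\<And>k. length (w k) = L" "\<And>k. length (w' k) = L" "loops_concat w q = loops_concat w' q"
  shows "\<forall>k<q. w k = w' k"
  using assms(3)
proof (induction q)
  case (Suc q)
  have "w q @ loops_concat w q = w' q @ loops_concat w' q" using Suc.prems by simp
  moreover have "length (w q) = length (w' q)" using assms by simp
  ultimately show ?case using Suc.IH by (auto simp: less_Suc_eq)
qed simp

lemma drop_loops_concat_mono:
  assumes len: "\<And>k. length (w k) = L" and "Q \<le> Q'" and k: "k \<le> Q * L"
  shows "drop (Q' * L - k) (loops_concat w Q') = drop (Q * L - k) (loops_concat w Q)"
  using \<open>Q \<le> Q'\<close>
proof (induction Q' rule: dec_induct)
  case (step Q')
  have "k \<le> Q' * L" using step.hyps k by (meson le_trans mult_le_mono1)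
  hence "drop (Suc Q' * L - k) (loops_concat w (Suc Q')) = drop (Q' * L - k) (loops_concat w Q')"
    using len[of Q'] by (simp add: drop_append)
  thus ?case using step.IH by simp
qed simp

lemma loop_ray_eq_drop:
  assumes len: "\<And>k. length (w k) = L" and L: "L > 0" and k: "k \<le> Q * L"
  shows "loop_ray L w k = drop (Q * L - k) (loops_concat w Q)"
proof -
  have "k \<le> Suc k * L" using le_Suc_mult[OF L, of k] by simp
  thus ?thesis unfolding loop_ray_def
    using drop_loops_concat_mono[OF len, of Q "max Q (Suc k)" k]
      drop_loops_concat_mono[OF len, of "Suc k" "max Q (Suc k)" k] k by simp
qed

lemma length_loop_ray: "(\<And>k. length (w k) = L) \<Longrightarrow> L > 0 \<Longrightarrow> length (loop_ray L w k) = k"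
  using le_Suc_mult[of L k] by (simp add: loop_ray_def length_loops_concat)

lemma loop_ray_block: "(\<And>k. length (w k) = L) \<Longrightarrow> L > 0 \<Longrightarrow> loop_ray L w (q * L) = loops_concat w q"
  using loop_ray_eq_drop[of w L "q * L" q] by simp

lemma loop_ray_Suc:
  assumes len: "\<And>k. length (w k) = L" and L: "L > 0"
  shows "loop_ray L w (Suc k) = loops_concat w (Suc k) ! (Suc k * L - Suc k) # loop_ray L w k"
proof -
  define xs where "xs = loops_concat w (Suc k)"
  have le: "Suc k \<le> Suc k * L" using le_Suc_mult[OF L] .
  have "loop_ray L w (Suc k) = drop (Suc k * L - Suc k) xs"
    unfolding xs_def by (rule loop_ray_eq_drop[OF len L le])
  moreover have "loop_ray L w k = drop (Suc k * L - k) xs"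
    unfolding xs_def by (rule loop_ray_eq_drop[OF len L]) (use le in simp)
  moreover have "Suc k * L - k = Suc (Suc k * L - Suc k)" using le by simp
  moreover have "Suc k * L - Suc k < length xs"
    using le len by (simp add: xs_def length_loops_concat)
  ultimately show ?thesis unfolding xs_def[symmetric] by (simp add: Cons_nth_drop_Suc)
qed

lemma loop_ray_drop:
  assumes len: "\<And>k. length (w k) = L" and L: "L > 0" and "m \<le> n"
  shows "loop_ray L w m = drop (n - m) (loop_ray L w n)"
proof -
  have n: "n \<le> Suc n * L" using le_Suc_mult[OF L, of n] by simp
  hence "loop_ray L w m = drop (Suc n * L - m) (loops_concat w (Suc n))"
    using \<open>m \<le> n\<close> by (intro loop_ray_eq_drop[OF len L]) simp
  also have "Suc n * L - m = (n - m) + (Suc n * L - n)" using n \<open>m \<le> n\<close> by linarith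
  also have "drop \<dots> (loops_concat w (Suc n)) = drop (n - m) (drop (Suc n * L - n) (loops_concat w (Suc n)))"
    by (simp only: drop_drop)
  finally show ?thesis using loop_ray_eq_drop[OF len L n] by simp
qed

lemma graph_path_drop: "graph_path Ed s r xs \<Longrightarrow> graph_path Ed s r (drop n xs)"
  using graph_path_append[of Ed s r "take n xs" "drop n xs"] by simp

context finite_graph
begin

lemma closed_walkD:
  assumes "zs \<in> walks L i i" "L > 0"
  shows "length zs = L" "zs \<noteq> []" "graph_path Ed s r zs" "s (hd zs) = i" "r (last zs) = i"
  using assms by (auto simp: walks_def split: if_splits)

lemma loops_concat_closed:
  assumes w: "\<And>k. w k \<in> walks L i i" and L: "L > 0"
  shows "graph_path Ed s r (loops_concat w q) \<and>
    (loops_concat w q \<noteq> [] \<longrightarrow> s (hd (loops_concat w q)) = i \<and> r (last (loops_concat w q)) = i)"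
  by (induction q) (use closed_walkD[OF w L] in \<open>auto simp: graph_path_append last_append\<close>)

lemma loop_ray_paths_to:
  assumes w: "\<And>k. w k \<in> walks L i i" and L: "L > 0"
  shows "loop_ray L w k \<in> paths_to Ed s r k i"
proof -
  have len: "\<And>k. length (w k) = L" using closed_walkD[OF w L] by blast
  define xs where "xs = loops_concat w (Suc k)"
  have xs: "graph_path Ed s r xs" "xs \<noteq> [] \<longrightarrow> r (last xs) = i"
    using loops_concat_closed[where w = w, OF w L, of "Suc k"] by (simp_all add: xs_def del: loops_concat.simps)
  have ray: "loop_ray L w k = drop (Suc k * L - k) xs" by (simp add: loop_ray_def xs_def)
  have "loop_ray L w k \<noteq> [] \<Longrightarrow> r (last (loop_ray L w k)) = i"
    using xs(2) by (auto simp: ray last_drop)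
  moreover have "graph_path Ed s r (loop_ray L w k)" unfolding ray by (rule graph_path_drop[OF xs(1)])
  ultimately show ?thesis using length_loop_ray[of w L k, OF len L] by (simp add: paths_to_def)
qed

lemma loop_ray_in_cover_boundary:
  assumes w: "\<And>k. w k \<in> walks L i i" and L: "L > 0"
  shows "loop_ray L w \<in> cover_boundary Ed s r i"
  unfolding cover_boundary_def
proof (intro CollectI conjI allI)
  have len: "\<And>k. length (w k) = L" using closed_walkD[OF w L] by blast
  show "loop_ray L w 0 = []" using length_loop_ray[of w L 0, OF len L] by simp
  fix k
  show "loop_ray L w (Suc k) \<in> all_paths_to Ed s r i"
    using loop_ray_paths_to[where w = w, OF w L] by (auto simp: all_paths_to_def)
  let ?xs = "loops_concat w (Suc k)" and ?j = "Suc k * L - Suc k"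
  have "?j < length ?xs" using le_Suc_mult[OF L, of k] len by (simp add: length_loops_concat)
  moreover have "set ?xs \<subseteq> Ed"
    using loops_concat_closed[where w = w, OF w L, of "Suc k"] by (simp add: graph_path_def del: loops_concat.simps)
  ultimately have "?xs ! ?j \<in> Ed" using nth_mem by blast
  thus "\<exists>e\<in>Ed. loop_ray L w (Suc k) = e # loop_ray L w k" using loop_ray_Suc[of w L, OF len L] by blast
qed

lemma loop_ray_agree_imp_eq:
  assumes w: "\<And>k. w k \<in> walks L i i" and w': "\<And>k. w' k \<in> walks L i i" and L: "L > 0"
    and agree: "loop_ray L w n = loop_ray L w' n" and qn: "q * L \<le> n"
  shows "\<forall>k<q. w k = w' k"
proof -
  have len: "\<And>k. length (w k) = L" "\<And>k. length (w' k) = L"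
    using closed_walkD[OF w L] closed_walkD[OF w' L] by blast+
  have "loops_concat w q = loops_concat w' q"
    using loop_ray_drop[of w L, OF len(1) L qn] loop_ray_drop[of w' L, OF len(2) L qn] agree
    by (simp add: loop_ray_block[of w L, OF len(1) L] loop_ray_block[of w' L, OF len(2) L])
  thus ?thesis by (rule loops_concat_inj[of w L w', OF len])
qed

lemma loop_ray_close_imp_agree:
  assumes w: "\<And>k. w k \<in> walks L i i" and w': "\<And>k. w' k \<in> walks L i i" and L: "L > 0"
    and close: "ray_dist (loop_ray L w) (loop_ray L w') \<le> D" and D: "D > 0"
  shows "\<forall>k < nat \<lceil>- ln D\<rceil> div L. w k = w' k"
proof -
  define m where "m = nat \<lceil>- ln D\<rceil>"
  have "loop_ray L w 0 = loop_ray L w' 0"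
    using loop_ray_in_cover_boundary[where w = w, OF w L] loop_ray_in_cover_boundary[where w = w', OF w' L]
    by (simp add: cover_boundary_def)
  hence "\<forall>k\<le>m. loop_ray L w k = loop_ray L w' k"
    unfolding m_def by (rule ray_dist_le_imp_agree[OF close D])
  hence "loop_ray L w m = loop_ray L w' m" by simp
  thus ?thesis
    unfolding m_def[symmetric] by (rule loop_ray_agree_imp_eq[where w = w and w' = w', OF w w' L]) simp
qed

lemma inj_on_loop_ray:
  assumes L: "L > 0"
  shows "inj_on (loop_ray L) {w. \<forall>k. w k \<in> walks L i i}"
proof (rule inj_onI, rule ext)
  fix w w' k assume w: "w \<in> {w. \<forall>k. w k \<in> walks L i i}" and w': "w' \<in> {w. \<forall>k. w k \<in> walks L i i}"
    and eq: "loop_ray L w = loop_ray L w'"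
  have "\<forall>j<Suc k. w j = w' j"
    by (rule loop_ray_agree_imp_eq[where w = w and w' = w' and n = "Suc k * L" and q = "Suc k"])
      (use w w' L eq in auto)
  thus "w k = w' k" by simp
qed

end

section \<open>A mass distribution on the boundary\<close>

lemma power_inverse_div_le_powr:
  fixes K t D :: real and L m :: nat
  assumes K: "K > 0" and t: "t > 0" and L: "L > 0" and D: "D > 0"
    and tL: "exp (t * real L) \<le> K" and m: "real m \<ge> - ln D"
  shows "(1 / K) ^ (m div L) \<le> K * D powr t"
proof -
  define q where "q = m div L"
  have "m mod L < L" using L by simp
  hence "m < Suc q * L" using div_mult_mod_eq[of m L] unfolding q_def mult_Suc by linarith
  hence "real m \<le> real (Suc q * L)" by (simp only: of_nat_le_iff less_imp_le)
  hence "real m \<le> real (Suc q) * real L" by (simp only: of_nat_mult)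
  hence "exp (t * real m) \<le> exp (t * (real (Suc q) * real L))"
    using t by (intro exp_mono mult_left_mono) auto
  also have "\<dots> = exp (t * real L) ^ Suc q"
    by (metis exp_of_nat_mult mult.commute mult.left_commute)
  also have "\<dots> \<le> K ^ Suc q" using tL by (intro power_mono) auto
  finally have "1 / K ^ Suc q \<le> 1 / exp (t * real m)" using K by (intro divide_left_mono) auto
  moreover have "exp (- real m) powr t = exp (t * - real m)"
    by (simp only: powr_def exp_not_eq_zero if_False ln_exp)
  hence "1 / exp (t * real m) = exp (- real m) powr t" by (simp add: exp_minus inverse_eq_divide)
  moreover have "exp (- real m) \<le> exp (ln D)" using m by simp
  hence "exp (- real m) powr t \<le> D powr t" using D t by (intro powr_mono2) auto
  ultimately have "1 / K ^ Suc q \<le> D powr t" by linarith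
  hence "K * (1 / K ^ Suc q) \<le> K * D powr t" using K by (intro mult_left_mono) auto
  thus ?thesis using K by (simp add: q_def field_simps)
qed

definition seq_cylinder :: "nat \<Rightarrow> (nat \<Rightarrow> 'a) \<Rightarrow> (nat \<Rightarrow> 'a) set" where
  "seq_cylinder q w0 = {w. \<forall>k<q. w k = w0 k}"

lemma uniform_PiM_seq_cylinder:
  fixes W :: "'a set"
  defines "M \<equiv> PiM UNIV (\<lambda>_::nat. uniform_count_measure W)"
  assumes W: "finite W" and w0: "\<And>k. w0 k \<in> W"
  shows "space M \<inter> seq_cylinder q w0 \<in> sets M"
    and "emeasure M (space M \<inter> seq_cylinder q w0) = ennreal ((1 / real (card W)) ^ q)"
proof -
  have W0: "W \<noteq> {}" using w0 by blast
  have prob: "prob_space (uniform_count_measure W)" by (rule prob_space_uniform_count_measure[OF W W0])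
  have cyl: "space M \<inter> seq_cylinder q w0 =
      prod_emb UNIV (\<lambda>_. uniform_count_measure W) {..<q} (PiE {..<q} (\<lambda>k. {w0 k}))"
    by (auto simp: M_def seq_cylinder_def prod_emb_iff space_PiM PiE_UNIV_domain
        space_uniform_count_measure restrict_PiE_iff Pi_iff)
  show "space M \<inter> seq_cylinder q w0 \<in> sets M"
    unfolding cyl unfolding M_def by (rule sets_PiM_I) (use w0 in \<open>auto simp: sets_uniform_count_measure\<close>)
  have "emeasure M (space M \<inter> seq_cylinder q w0) = (\<Prod>k<q. emeasure (uniform_count_measure W) {w0 k})"
    unfolding cyl unfolding M_def
    by (rule emeasure_PiM_emb) (use prob w0 in \<open>auto simp: sets_uniform_count_measure\<close>)
  also have "\<dots> = (\<Prod>k<q. ennreal (1 / real (card W)))"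
    using w0 W by (intro prod.cong refl) (simp add: emeasure_uniform_count_measure)
  finally show "emeasure M (space M \<inter> seq_cylinder q w0) = ennreal ((1 / real (card W)) ^ q)"
    by (simp add: ennreal_power)
qed

lemma suminf_half_powers_ennreal: "(\<Sum>j. ennreal ((1/2) ^ Suc (Suc j))) = ennreal (1/2)"
proof -
  have "(\<lambda>j. (1/2::real) ^ Suc (Suc j)) sums (1/4 * (1 / (1 - 1/2)))"
    using sums_mult[OF geometric_sums[of "1/2::real"], of "1/4"] by (simp add: mult.assoc)
  hence s: "(\<lambda>j. (1/2::real) ^ Suc (Suc j)) sums (1/2)" by simp
  have "(\<Sum>j. ennreal ((1/2) ^ Suc (Suc j))) = ennreal (\<Sum>j. (1/2::real) ^ Suc (Suc j))"
    by (rule suminf_ennreal2) (use s in \<open>auto simp: sums_iff\<close>)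
  also have "\<dots> = ennreal (1/2)" by (simp only: sums_unique[OF s, symmetric])
  finally show ?thesis .
qed

lemma ennreal_inverse_le_of_affine_le:
  assumes c: "c > 0" and le: "1 \<le> ennreal c * X + ennreal (1/2)"
  shows "ennreal (1 / (2 * c)) \<le> X"
proof (cases X rule: ennreal_cases)
  case (real x)
  hence "ennreal 1 \<le> ennreal (c * x + 1/2)"
    using le c by (simp add: ennreal_mult[symmetric] ennreal_plus[symmetric])
  hence "1 \<le> c * x + 1/2" using real c by (subst (asm) ennreal_le_iff) auto
  hence "1 / (2 * c) \<le> x" using c by (simp add: field_simps)
  thus ?thesis using real by (simp add: ennreal_leI)
qed simp

locale closed_walk_product = finite_graph +
  fixes L i :: nat
  assumes L_pos: "L > 0" and two_closed_walks: "card (walks L i i) \<ge> 2"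
begin

abbreviation K :: real where "K \<equiv> real (card (walks L i i))"

definition loop_space where
  "loop_space = PiM UNIV (\<lambda>_::nat. uniform_count_measure (walks L i i))"

lemma space_loop_space: "space loop_space = {w. \<forall>k. w k \<in> walks L i i}"
  by (auto simp: loop_space_def space_PiM PiE_UNIV_domain space_uniform_count_measure)

lemma prob_space_loop_space: "prob_space loop_space"
proof -
  have "walks L i i \<noteq> {}" using two_closed_walks by auto
  thus ?thesis unfolding loop_space_def
    by (intro prob_space_PiM prob_space_uniform_count_measure finite_walks)
qed

lemma loop_space_cylinder:
  assumes "w0 \<in> space loop_space"
  shows "space loop_space \<inter> seq_cylinder q w0 \<in> sets loop_space"
    and "emeasure loop_space (space loop_space \<inter> seq_cylinder q w0) = ennreal ((1 / K) ^ q)"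
proof -
  have w0: "\<And>k. w0 k \<in> walks L i i" using assms by (simp add: space_loop_space)
  show "space loop_space \<inter> seq_cylinder q w0 \<in> sets loop_space"
    unfolding loop_space_def by (rule uniform_PiM_seq_cylinder(1)[OF finite_walks w0])
  show "emeasure loop_space (space loop_space \<inter> seq_cylinder q w0) = ennreal ((1 / K) ^ q)"
    unfolding loop_space_def by (rule uniform_PiM_seq_cylinder(2)[OF finite_walks w0])
qed

lemma loop_ray_preimage_subset_cylinder:
  assumes bdd: "bdd_above ((\<lambda>p. ray_dist (fst p) (snd p)) ` (U \<times> U))"
    and D: "set_diam ray_dist U > 0" and w0: "w0 \<in> space loop_space" "loop_ray L w0 \<in> U"
  shows "{w \<in> space loop_space. loop_ray L w \<in> U}
           \<subseteq> space loop_space \<inter> seq_cylinder (nat \<lceil>- ln (set_diam ray_dist U)\<rceil> div L) w0"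
proof
  fix w assume "w \<in> {w \<in> space loop_space. loop_ray L w \<in> U}"
  hence w: "w \<in> space loop_space" "loop_ray L w \<in> U" by auto
  have walks: "\<And>w k. w \<in> space loop_space \<Longrightarrow> w k \<in> walks L i i" by (simp add: space_loop_space)
  have "ray_dist (loop_ray L w) (loop_ray L w0) \<le> set_diam ray_dist U"
    using le_set_diam[OF bdd w(2) w0(2)] .
  thus "w \<in> space loop_space \<inter> seq_cylinder (nat \<lceil>- ln (set_diam ray_dist U)\<rceil> div L) w0"
    using loop_ray_close_imp_agree[where w = w and w' = w0, OF walks[OF w(1)] walks[OF w0(1)] L_pos _ D]
      w(1) by (auto simp: seq_cylinder_def)
qed

lemma cylinder_weight_le_diam_pow:
  assumes D: "set_diam ray_dist U > 0" "U \<noteq> {}" and t: "t \<ge> 0" and tL: "exp (t * real L) \<le> K"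
  shows "ennreal ((1 / K) ^ (nat \<lceil>- ln (set_diam ray_dist U)\<rceil> div L)) \<le> ennreal K * diam_pow ray_dist t U"
proof -
  have K2: "K \<ge> 2" using two_closed_walks by simp
  let ?q = "nat \<lceil>- ln (set_diam ray_dist U)\<rceil> div L"
  have "(1 / K) ^ ?q \<le> K * (if t = 0 then 1 else set_diam ray_dist U powr t)"
  proof (cases "t = 0")
    case True
    have "(1 / K) ^ ?q \<le> 1" using K2 by (intro power_le_one) auto
    thus ?thesis using True K2 by simp
  next
    case False
    have "real (nat \<lceil>- ln (set_diam ray_dist U)\<rceil>) \<ge> - ln (set_diam ray_dist U)" by linarith
    thus ?thesis using False t tL K2 L_pos D by (simp add: power_inverse_div_le_powr)
  qed
  thus ?thesis using D K2 by (auto simp: diam_pow_def ennreal_mult[symmetric] intro!: ennreal_leI)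
qed

lemma loop_ray_preimage_le:
  assumes bdd: "bdd_above ((\<lambda>p. ray_dist (fst p) (snd p)) ` (U \<times> U))"
    and t: "t \<ge> 0" and tL: "exp (t * real L) \<le> K"
  shows "\<exists>C\<in>sets loop_space. {w \<in> space loop_space. loop_ray L w \<in> U} \<subseteq> C \<and>
           emeasure loop_space C \<le> ennreal K * diam_pow ray_dist t U + ennreal ((1/2) ^ n)"
proof (cases "{w \<in> space loop_space. loop_ray L w \<in> U} = {}")
  case False
  then obtain w0 where w0: "w0 \<in> space loop_space" "loop_ray L w0 \<in> U" by blast
  let ?Cyl = "\<lambda>q. space loop_space \<inter> seq_cylinder q w0"
  consider (two) x y where "x \<in> U" "y \<in> U" "x \<noteq> y" | (one) "\<forall>x\<in>U. \<forall>y\<in>U. x = y" by blast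
  thus ?thesis
  proof cases
    case two
    have "0 < ray_dist x y" using two(3) by (simp add: ray_dist_def)
    hence D: "set_diam ray_dist U > 0" using le_set_diam[OF bdd two(1,2)] by simp
    let ?q = "nat \<lceil>- ln (set_diam ray_dist U)\<rceil> div L"
    have "emeasure loop_space (?Cyl ?q) \<le> ennreal K * diam_pow ray_dist t U"
      using cylinder_weight_le_diam_pow[OF D _ t tL] two(1) loop_space_cylinder(2)[OF w0(1)] by auto
    thus ?thesis
      using loop_ray_preimage_subset_cylinder[OF bdd D w0] loop_space_cylinder(1)[OF w0(1)]
      by (intro bexI[of _ "?Cyl ?q"]) (auto intro: add_increasing2)
  next
    case one
    have "w = w0" if "w \<in> space loop_space" "loop_ray L w \<in> U" for w
      by (rule inj_onD[OF inj_on_loop_ray[OF L_pos, of i]]) (use one w0 that in \<open>auto simp: space_loop_space\<close>)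
    hence "{w \<in> space loop_space. loop_ray L w \<in> U} \<subseteq> ?Cyl n"
      using w0(1) by (auto simp: seq_cylinder_def)
    moreover have "(1 / K) ^ n \<le> (1/2) ^ n" using two_closed_walks by (intro power_mono) auto
    hence "emeasure loop_space (?Cyl n) \<le> ennreal ((1/2) ^ n)"
      using loop_space_cylinder(2)[OF w0(1)] by (simp add: ennreal_leI)
    ultimately show ?thesis
      using loop_space_cylinder(1)[OF w0(1)] by (intro bexI[of _ "?Cyl n"]) (auto intro: add_increasing)
  qed
qed force

lemma loop_ray_cover_mass:
  assumes cover: "cover_boundary Ed s r i \<subseteq> (\<Union>j. U j)"
    and bdd: "\<And>j. bdd_above ((\<lambda>p. ray_dist (fst p) (snd p)) ` (U j \<times> U j))"
    and t: "t \<ge> 0" and tL: "exp (t * real L) \<le> K"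
  shows "ennreal (1 / (2 * K)) \<le> (\<Sum>j. diam_pow ray_dist t (U j))"
proof -
  define X where "X = (\<Sum>j. diam_pow ray_dist t (U j))"
  have "\<forall>j. \<exists>C. C \<in> sets loop_space \<and> {w \<in> space loop_space. loop_ray L w \<in> U j} \<subseteq> C \<and>
      emeasure loop_space C \<le> ennreal K * diam_pow ray_dist t (U j) + ennreal ((1/2) ^ Suc (Suc j))"
    using loop_ray_preimage_le[OF bdd t tL] by blast
  then obtain C where "\<forall>j. C j \<in> sets loop_space \<and> {w \<in> space loop_space. loop_ray L w \<in> U j} \<subseteq> C j \<and>
      emeasure loop_space (C j) \<le> ennreal K * diam_pow ray_dist t (U j) + ennreal ((1/2) ^ Suc (Suc j))"
    by (rule choice[THEN exE])
  hence C: "\<And>j. C j \<in> sets loop_space" "\<And>j. {w \<in> space loop_space. loop_ray L w \<in> U j} \<subseteq> C j"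
    "\<And>j. emeasure loop_space (C j) \<le> ennreal K * diam_pow ray_dist t (U j) + ennreal ((1/2) ^ Suc (Suc j))"
    by simp_all
  have "space loop_space \<subseteq> (\<Union>j. C j)"
  proof
    fix w assume w: "w \<in> space loop_space"
    hence "loop_ray L w \<in> cover_boundary Ed s r i"
      by (intro loop_ray_in_cover_boundary[OF _ L_pos]) (simp add: space_loop_space)
    thus "w \<in> (\<Union>j. C j)" using cover C(2) w by blast
  qed
  moreover have "(\<Union>j. C j) \<in> sets loop_space" by (rule sets.countable_UN) (use C(1) in auto)
  ultimately have "emeasure loop_space (space loop_space) \<le> emeasure loop_space (\<Union>j. C j)"
    by (rule emeasure_mono)
  hence "1 \<le> emeasure loop_space (\<Union>j. C j)"
    by (simp add: prob_space.emeasure_space_1[OF prob_space_loop_space])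
  also have "\<dots> \<le> (\<Sum>j. emeasure loop_space (C j))"
    by (rule emeasure_subadditive_countably) (use C(1) in auto)
  also have "\<dots> \<le> (\<Sum>j. ennreal K * diam_pow ray_dist t (U j) + ennreal ((1/2) ^ Suc (Suc j)))"
    by (intro suminf_le C(3) summableI)
  also have "\<dots> = (\<Sum>j. ennreal K * diam_pow ray_dist t (U j)) + (\<Sum>j. ennreal ((1/2) ^ Suc (Suc j)))"
    by (rule suminf_add[OF summableI summableI, symmetric])
  also have "\<dots> = ennreal K * X + ennreal (1/2)"
    by (simp only: ennreal_suminf_cmult X_def suminf_half_powers_ennreal)
  finally show ?thesis
    unfolding X_def[symmetric] using two_closed_walks by (intro ennreal_inverse_le_of_affine_le) auto
qed

lemma hausdorff_measure_cover_boundary_ge: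
  assumes t: "t \<ge> 0" and tL: "exp (t * real L) \<le> K"
  shows "ennreal (1 / (2 * K)) \<le> hausdorff_measure ray_dist (cover_boundary Ed s r i) t"
proof -
  have "ennreal (1 / (2 * K)) \<le> hausdorff_content ray_dist (cover_boundary Ed s r i) t 1"
    unfolding hausdorff_content_def
    by (rule INF_greatest) (auto intro: loop_ray_cover_mass[OF _ _ t tL])
  also have "\<dots> \<le> hausdorff_measure ray_dist (cover_boundary Ed s r i) t"
    unfolding hausdorff_measure_def by (rule SUP_upper) simp
  finally show ?thesis .
qed

end

section \<open>The spectral radius, the critical inverse temperatures and the dimensions\<close>

context finite_graph
begin

lemma cycle_closed_walk:
  assumes "\<mu> \<noteq> []" "graph_path Ed s r \<mu>" "s (hd \<mu>) = r (last \<mu>)"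
  shows "s (hd \<mu>) < N" "walk_count (length \<mu>) (s (hd \<mu>)) (s (hd \<mu>)) > 0"
proof -
  have "hd \<mu> \<in> Ed" using assms(1,2) by (auto simp: graph_path_def)
  thus u: "s (hd \<mu>) < N" using vertices_bounded by auto
  have "\<mu> \<in> walks (length \<mu>) (s (hd \<mu>)) (s (hd \<mu>))" using assms by (simp add: walks_def)
  hence "card (walks (length \<mu>) (s (hd \<mu>)) (s (hd \<mu>))) > 0"
    using finite_walks card_gt_0_iff by blast
  thus "walk_count (length \<mu>) (s (hd \<mu>)) (s (hd \<mu>)) > 0" by (simp add: card_walks[OF u])
qed

lemma frequent_growth_exceeds_exp:
  assumes c: "c > 0" and rho: "rho > 0" and t: "t < ln rho"
    and growth: "\<exists>\<^sub>F L in sequentially. c * rho ^ L \<le> real (walk_count L i i)"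
  shows "\<exists>\<^sub>F L in sequentially. 2 * exp (t * real L) \<le> real (walk_count L i i)"
proof -
  define a where "a = rho * exp (- t)"
  have "exp t < exp (ln rho)" using t by simp
  hence a: "a > 1" using rho by (simp add: a_def exp_minus field_simps)
  have rho_pow: "rho ^ L = a ^ L * exp (t * real L)" for L
  proof -
    have "rho = a * exp t" by (simp add: a_def exp_minus)
    thus ?thesis by (simp add: power_mult_distrib exp_of_nat_mult[symmetric] mult.commute)
  qed
  obtain n where n: "2 / c < a ^ n" using real_arch_pow[OF a] by blast
  have "eventually (\<lambda>L. 2 < c * a ^ L) sequentially"
  proof (rule eventually_sequentiallyI)
    fix L assume "n \<le> L"
    hence "c * a ^ n \<le> c * a ^ L" using a c by (intro mult_left_mono power_increasing) auto
    moreover have "2 < c * a ^ n" using n c by (simp add: field_simps)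
    ultimately show "2 < c * a ^ L" by linarith
  qed
  with growth show ?thesis
  proof (rule frequently_elim1[OF frequently_eventually_frequently], elim conjE)
    fix L assume w: "c * rho ^ L \<le> real (walk_count L i i)" and a_L: "2 < c * a ^ L"
    have "2 * exp (t * real L) \<le> c * a ^ L * exp (t * real L)"
      by (rule mult_right_mono) (use a_L in auto)
    moreover have "c * a ^ L * exp (t * real L) = c * rho ^ L" by (simp add: rho_pow mult.assoc)
    ultimately show "2 * exp (t * real L) \<le> real (walk_count L i i)" using w by linarith
  qed
qed

lemma ln_rho_le_hausdorff_dim:
  assumes i: "i < N" and c: "c > 0" and rho: "rho \<ge> 1"
    and growth: "\<exists>\<^sub>F L in sequentially. c * rho ^ L \<le> real (walk_count L i i)"
  shows "ereal (ln rho) \<le> hausdorff_dim ray_dist (cover_boundary Ed s r i)"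
  unfolding hausdorff_dim_def
proof (rule Inf_greatest)
  fix x assume "x \<in> ereal ` {t. 0 \<le> t \<and> hausdorff_measure ray_dist (cover_boundary Ed s r i) t = 0}"
  then obtain t where x: "x = ereal t" and t: "t \<ge> 0"
    and null: "hausdorff_measure ray_dist (cover_boundary Ed s r i) t = 0" by blast
  have "ln rho \<le> t"
  proof (rule ccontr)
    assume "\<not> ln rho \<le> t"
    hence "\<exists>\<^sub>F L in sequentially. 2 * exp (t * real L) \<le> real (walk_count L i i)"
      using rho by (intro frequent_growth_exceeds_exp[OF c _ _ growth]) auto
    then obtain L where L: "L > 0" "2 * exp (t * real L) \<le> real (card (walks L i i))"
      unfolding frequently_sequentially card_walks[OF i] by (metis le_refl gr0I le_zero_eq not_one_le_zero)
    have "1 \<le> exp (t * real L)" using t by simp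
    hence walks: "card (walks L i i) \<ge> 2" "exp (t * real L) \<le> real (card (walks L i i))" using L(2) by linarith+
    interpret closed_walk_product N Ed s r L i by unfold_locales (use L walks in auto)
    have "0 < ennreal (1 / (2 * K))" using walks by simp
    also have "\<dots> \<le> hausdorff_measure ray_dist (cover_boundary Ed s r i) t"
      by (rule hausdorff_measure_cover_boundary_ge[OF t walks(2)])
    finally show False using null by simp
  qed
  thus "ereal (ln rho) \<le> x" using x by simp
qed

lemma infinite_all_paths_to:
  assumes i: "i < N" and closed: "\<exists>\<^sub>F L in sequentially. walk_count L i i > 0"
  shows "infinite (all_paths_to Ed s r i)"
proof
  assume fin: "finite (all_paths_to Ed s r i)"
  obtain L where L: "L > Max (length ` all_paths_to Ed s r i)" "walk_count L i i > 0"
    using closed unfolding frequently_sequentially by (meson Suc_le_lessD)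
  then obtain xs where "xs \<in> walks L i i" using card_walks[OF i] by (metis card.empty empty_iff neq0_conv subsetI subset_empty)
  hence "xs \<in> all_paths_to Ed s r i" "length xs = L"
    by (auto simp: walks_def paths_to_def all_paths_to_def split: if_splits)
  thus False using L(1) fin by (metis Max_ge finite_imageI image_eqI not_le)
qed

lemma Max_crit_beta_eq:
  assumes N: "N > 0" and i: "i < N" and c: "c > 0" and rho: "rho \<ge> 1"
    and growth: "\<exists>\<^sub>F L in sequentially. c * rho ^ L \<le> real (walk_count L i i)"
  shows "Max {crit_beta Ed s r v | v. v < N} = ereal (ln rho)"
proof (rule Max_eqI)
  show "finite {crit_beta Ed s r v | v. v < N}" by simp
  show "y \<le> ereal (ln rho)" if "y \<in> {crit_beta Ed s r v | v. v < N}" for y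
    using that crit_beta_le_ln_rho[OF N] by auto
  have "crit_beta Ed s r i = ereal (ln rho)"
    using crit_beta_le_ln_rho[OF N i] ln_rho_le_crit_beta[OF i c rho growth] by (rule antisym)
  thus "ereal (ln rho) \<in> {crit_beta Ed s r v | v. v < N}" using i by force
qed

lemma Max_hausdorff_dim_eq:
  assumes N: "N > 0" and i: "i < N" and c: "c > 0" and rho: "rho \<ge> 1"
    and growth: "\<exists>\<^sub>F L in sequentially. c * rho ^ L \<le> real (walk_count L i i)"
  shows "Max {hausdorff_dim ray_dist (cover_boundary Ed s r v) | v.
           v < N \<and> infinite (all_paths_to Ed s r v)} = ereal (ln rho)"
proof (rule Max_eqI)
  show "finite {hausdorff_dim ray_dist (cover_boundary Ed s r v) | v.
          v < N \<and> infinite (all_paths_to Ed s r v)}" by simp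
  show "y \<le> ereal (ln rho)"
    if "y \<in> {hausdorff_dim ray_dist (cover_boundary Ed s r v) | v. v < N \<and> infinite (all_paths_to Ed s r v)}"
    for y using that hausdorff_dim_le_ln_rho[OF N rho] by auto
  have "hausdorff_dim ray_dist (cover_boundary Ed s r i) = ereal (ln rho)"
    using hausdorff_dim_le_ln_rho[OF N rho i] ln_rho_le_hausdorff_dim[OF i c rho growth] by (rule antisym)
  moreover have "\<exists>\<^sub>F L in sequentially. walk_count L i i > 0"
  proof (rule frequently_elim1[OF growth])
    fix L assume "c * rho ^ L \<le> real (walk_count L i i)"
    moreover have "0 < c * rho ^ L" using c rho by simp
    ultimately have "0 < real (walk_count L i i)" by linarith
    thus "walk_count L i i > 0" by simp
  qed
  ultimately show "ereal (ln rho) \<in> {hausdorff_dim ray_dist (cover_boundary Ed s r v) | v.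
      v < N \<and> infinite (all_paths_to Ed s r v)}"
    using i infinite_all_paths_to[OF i] by force
qed

end

theorem proposition5p8:
  fixes N :: nat and Ed :: "'e set" and s r :: "'e \<Rightarrow> nat"
  assumes "finite Ed"
    and "\<forall>e\<in>Ed. s e < N \<and> r e < N"
    and "\<exists>\<mu>. \<mu> \<noteq> [] \<and> graph_path Ed s r \<mu> \<and> s (hd \<mu>) = r (last \<mu>)"
  shows "ereal (ln (spectral_radius (adj_mat N Ed s r)))
           = Max {crit_beta Ed s r v | v. v < N}
       \<and> Max {crit_beta Ed s r v | v. v < N}
           = Max {hausdorff_dim ray_dist (cover_boundary Ed s r v) | v.
                    v < N \<and> infinite (all_paths_to Ed s r v)}"
proof -
  interpret finite_graph N Ed s r using assms(1,2) by unfold_locales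
  obtain \<mu> where \<mu>: "\<mu> \<noteq> []" "graph_path Ed s r \<mu>" "s (hd \<mu>) = r (last \<mu>)" using assms(3) by blast
  have N: "N > 0" using cycle_closed_walk(1)[OF \<mu>] by simp
  have rho: "rho \<ge> 1"
    using closed_walk_imp_rho_ge_1[OF cycle_closed_walk(1)[OF \<mu>] _ cycle_closed_walk(2)[OF \<mu>]] \<mu>(1)
    by simp
  obtain i c where "i < N" "c > 0" "\<exists>\<^sub>F L in sequentially. c * rho ^ L \<le> real (walk_count L i i)"
    using frequent_closed_walk_growth[OF N rho] by blast
  thus ?thesis using Max_crit_beta_eq[OF N _ _ rho] Max_hausdorff_dim_eq[OF N _ _ rho] by simp
qed

end
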